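(* Let $1\le p\le\infty$ and $a\in\mathbb{D}=\{z\in\mathbb{C}:|z|<1\}$, and let $R(p,a)$ be the least constant such that $b_{\mathbb{D},p}(T_a(z_1),T_a(z_2))\le R(p,a)\,b_{\mathbb{D},p}(z_1,z_2)$ for all $z_1,z_2\in\mathbb{D}$, where $T_a(z)=\frac{z-a}{1-\overline{a}z}$. Then $R(p,a)\ge 1+|a|$.
   Context: For $z_1,z_2\in\mathbb{D}$ and $1\le p<\infty$, $b_{\mathbb{D},p}(z_1,z_2)=\sup_{z\in\partial\mathbb{D}}\frac{|z_1-z_2|}{\sqrt[p]{|z_1-z|^p+|z-z_2|^p}}$, and $b_{\mathbb{D},\infty}(z_1,z_2)=\sup_{z\in\partial\mathbb{D}}\frac{|z_1-z_2|}{\max\{|z_1-z|,|z_2-z|\}}$. (Such a finite least constant exists, since $T_a$ is Lipschitz with respect to $b_{\mathbb{D},p}$.) *)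

theory Defs
  imports "HOL-Analysis.Analysis" "HOL-Library.Extended_Real"
begin

definition bD :: "ereal \<Rightarrow> complex \<Rightarrow> complex \<Rightarrow> real" where
  "bD p z1 z2 =
     (if p = \<infinity> then
        (SUP z\<in>sphere (0::complex) 1. cmod (z1 - z2) / max (cmod (z1 - z)) (cmod (z2 - z)))
      else
        (SUP z\<in>sphere (0::complex) 1. cmod (z1 - z2) /
            ((cmod (z1 - z) powr real_of_ereal p + cmod (z - z2) powr real_of_ereal p)
               powr (1 / real_of_ereal p))))"

definition Tmob :: "complex \<Rightarrow> complex \<Rightarrow> complex" where
  "Tmob a z = (z - a) / (1 - cnj a * z)"

definition Rconst :: "ereal \<Rightarrow> complex \<Rightarrow> real" where
  "Rconst p a = Inf {C. \<forall>z1\<in>ball 0 1. \<forall>z2\<in>ball 0 1.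
                        bD p (Tmob a z1) (Tmob a z2) \<le> C * bD p z1 z2}"

end

theory Submission
  imports Defs
begin

text \<open>Write lp(x, y) for the l^p norm of (x, y). Let u = a/|a| and take z1, z2 of modulus
  at most t. Every boundary point is at distance at least 1 - t from z1 and z2, so
  bD(z1, z2) <= |z1 - z2| / ((1 - t) lp(1, 1)). On the other hand T_a fixes the boundary
  point -u and sends z1, z2 close to -a, that is to distance about 1 - |a| from -u, while
  |T_a z1 - T_a z2| is about (1 - |a|^2) |z1 - z2|. Testing the supremum defining
  bD(T_a z1, T_a z2) at -u therefore bounds every admissible constant from below by a
  quantity that tends to (1 - |a|^2) / (1 - |a|) = 1 + |a| as t tends to 0.
  Since Rconst is an infimum, the set of admissible constants must also be shown nonempty;
  ((1 + |a|) / (1 - |a|))^2 is admissible because T_a is bi-Lipschitz on the closed disc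
  and maps the unit circle onto itself.\<close>

definition lp_norm2 :: "ereal \<Rightarrow> real \<Rightarrow> real \<Rightarrow> real" where
  "lp_norm2 p x y = (if p = \<infinity> then max x y else
     (x powr real_of_ereal p + y powr real_of_ereal p) powr (1 / real_of_ereal p))"

lemma ereal_ge_1_cases:
  assumes "1 \<le> p"
  obtains "p = \<infinity>" | q where "p = ereal q" "1 \<le> q"
  using assms by (cases p) auto

lemma lp_norm2_ge_left:
  assumes "1 \<le> p" "0 \<le> x" "0 \<le> y"
  shows "x \<le> lp_norm2 p x y"
proof (cases rule: ereal_ge_1_cases[OF assms(1)])
  case 1
  then show ?thesis by (simp add: lp_norm2_def)
next
  case (2 q)
  have "x = (x powr q) powr (1/q)"
    using 2 assms by (simp add: powr_powr)
  also have "\<dots> \<le> (x powr q + y powr q) powr (1/q)"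
    using 2 assms by (intro powr_mono2) auto
  finally show ?thesis
    using 2 by (simp add: lp_norm2_def)
qed

lemma lp_norm2_pos:
  assumes "1 \<le> p" "0 < x" "0 \<le> y"
  shows "0 < lp_norm2 p x y"
  using lp_norm2_ge_left[OF assms(1) _ assms(3), of x] assms(2) by simp

lemma lp_norm2_mono:
  assumes "1 \<le> p" "0 \<le> x" "0 \<le> y" "x \<le> x'" "y \<le> y'"
  shows "lp_norm2 p x y \<le> lp_norm2 p x' y'"
proof (cases rule: ereal_ge_1_cases[OF assms(1)])
  case 1
  then show ?thesis
    using assms by (auto simp: lp_norm2_def le_max_iff_disj)
next
  case (2 q)
  have "(x powr q + y powr q) powr (1/q) \<le> (x' powr q + y' powr q) powr (1/q)"
    using 2 assms by (intro powr_mono2 add_mono) auto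
  then show ?thesis
    using 2 by (simp add: lp_norm2_def)
qed

lemma lp_norm2_scale:
  assumes "1 \<le> p" "0 \<le> x" "0 \<le> y" "0 \<le> c"
  shows "lp_norm2 p (c * x) (c * y) = c * lp_norm2 p x y"
proof (cases rule: ereal_ge_1_cases[OF assms(1)])
  case 1
  then show ?thesis
    using assms by (simp add: lp_norm2_def max_mult_distrib_left)
next
  case (2 q)
  have "(c * x) powr q + (c * y) powr q = c powr q * (x powr q + y powr q)"
    using assms by (simp add: powr_mult distrib_left)
  then have "((c * x) powr q + (c * y) powr q) powr (1/q)
      = (c powr q) powr (1/q) * (x powr q + y powr q) powr (1/q)"
    using assms by (simp add: powr_mult)
  also have "(c powr q) powr (1/q) = c"
    using 2 assms by (simp add: powr_powr)
  finally show ?thesis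
    using 2 by (simp add: lp_norm2_def)
qed

lemma lp_norm2_le_scale:
  assumes "1 \<le> p" "0 \<le> x" "0 \<le> y" "x \<le> c" "y \<le> c"
  shows "lp_norm2 p x y \<le> c * lp_norm2 p 1 1"
  using lp_norm2_mono[OF assms(1-3), of c c] lp_norm2_scale[OF assms(1), of 1 1 c] assms by simp

lemma lp_norm2_ge_scale:
  assumes "1 \<le> p" "0 \<le> c" "c \<le> x" "c \<le> y"
  shows "c * lp_norm2 p 1 1 \<le> lp_norm2 p x y"
  using lp_norm2_mono[OF assms(1), of c c x y] lp_norm2_scale[OF assms(1), of 1 1 c] assms by simp

lemma bD_eq_SUP:
  "bD p w1 w2 = (SUP z\<in>sphere 0 1. cmod (w1 - w2) / lp_norm2 p (cmod (w1 - z)) (cmod (w2 - z)))"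
  unfolding bD_def lp_norm2_def by (auto intro!: SUP_cong simp: norm_minus_commute[of _ w2])

lemma dist_sphere_ge:
  assumes "cmod z = 1"
  shows "1 - cmod w \<le> cmod (w - z)"
  using norm_triangle_ineq2[of z w] assms by (simp add: norm_minus_commute)

lemma bD_ge:
  assumes "1 \<le> p" "cmod w1 < 1" "z \<in> sphere 0 1"
  shows "cmod (w1 - w2) / lp_norm2 p (cmod (w1 - z)) (cmod (w2 - z)) \<le> bD p w1 w2"
  unfolding bD_eq_SUP
proof (rule cSUP_upper[OF assms(3)], rule bdd_aboveI2)
  fix z :: complex
  assume "z \<in> sphere 0 1"
  then have "1 - cmod w1 \<le> cmod (w1 - z)"
    by (simp add: dist_sphere_ge)
  also have "\<dots> \<le> lp_norm2 p (cmod (w1 - z)) (cmod (w2 - z))"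
    by (rule lp_norm2_ge_left[OF assms(1)]) auto
  finally show "cmod (w1 - w2) / lp_norm2 p (cmod (w1 - z)) (cmod (w2 - z))
      \<le> cmod (w1 - w2) / (1 - cmod w1)"
    using assms by (intro divide_left_mono) auto
qed

lemma bD_le:
  assumes "\<And>z. z \<in> sphere 0 1 \<Longrightarrow> cmod (w1 - w2) / lp_norm2 p (cmod (w1 - z)) (cmod (w2 - z)) \<le> B"
  shows "bD p w1 w2 \<le> B"
  unfolding bD_eq_SUP by (rule cSUP_least) (use assms in auto)

lemma bD_nonneg:
  assumes "1 \<le> p" "cmod w1 < 1"
  shows "0 \<le> bD p w1 w2"
proof -
  have "0 \<le> cmod (w1 - 1)" by simp
  also have "\<dots> \<le> lp_norm2 p (cmod (w1 - 1)) (cmod (w2 - 1))"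
    by (rule lp_norm2_ge_left[OF assms(1)]) auto
  finally have "0 \<le> cmod (w1 - w2) / lp_norm2 p (cmod (w1 - 1)) (cmod (w2 - 1))"
    by simp
  also have "\<dots> \<le> bD p w1 w2"
    by (rule bD_ge[OF assms]) simp
  finally show ?thesis .
qed

lemma Tmob_denom_bounds:
  assumes "cmod x \<le> t"
  shows "1 - cmod a * t \<le> cmod (1 - cnj a * x)" "cmod (1 - cnj a * x) \<le> 1 + cmod a * t"
proof -
  have "cmod a * cmod x \<le> cmod a * t"
    using assms by (simp add: mult_left_mono)
  then show "1 - cmod a * t \<le> cmod (1 - cnj a * x)" "cmod (1 - cnj a * x) \<le> 1 + cmod a * t"
    using norm_triangle_ineq2[of 1 "cnj a * x"] norm_triangle_ineq4[of 1 "cnj a * x"]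
    by (simp_all add: norm_mult)
qed

lemma Tmob_denom_nonzero:
  assumes "cmod a < 1" "cmod x \<le> 1"
  shows "1 - cnj a * x \<noteq> 0"
  using Tmob_denom_bounds(1)[OF assms(2), of a] assms(1) by auto

lemma norm_Tmob_diff:
  assumes "cmod a < 1" "1 - cnj a * x \<noteq> 0" "1 - cnj a * y \<noteq> 0"
  shows "cmod (Tmob a x - Tmob a y)
    = (1 - (cmod a)\<^sup>2) * cmod (x - y) / (cmod (1 - cnj a * x) * cmod (1 - cnj a * y))"
proof -
  have diff: "Tmob a x - Tmob a y = (1 - cnj a * a) * (x - y) / ((1 - cnj a * x) * (1 - cnj a * y))"
    using assms unfolding Tmob_def by (simp add: field_simps)
  have "cnj a * a = complex_of_real ((cmod a)\<^sup>2)"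
    by (metis complex_norm_square mult.commute)
  then have eq: "1 - cnj a * a = complex_of_real (1 - (cmod a)\<^sup>2)"
    by simp
  have "(cmod a)\<^sup>2 < 1"
    using assms(1) by (simp add: abs_square_less_1)
  then have "cmod (1 - cnj a * a) = 1 - (cmod a)\<^sup>2"
    unfolding eq norm_of_real by simp
  then show ?thesis
    unfolding diff by (simp add: norm_mult norm_divide)
qed

lemma Tmob_distortion:
  assumes a: "cmod a < 1" and t: "t \<le> 1" and x: "cmod x \<le> t" and y: "cmod y \<le> t"
  shows "(1 - (cmod a)\<^sup>2) * cmod (x - y) / (1 + cmod a * t)\<^sup>2 \<le> cmod (Tmob a x - Tmob a y)"
    and "cmod (Tmob a x - Tmob a y) \<le> (1 - (cmod a)\<^sup>2) * cmod (x - y) / (1 - cmod a * t)\<^sup>2"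
proof -
  let ?s = "(1 - (cmod a)\<^sup>2) * cmod (x - y)"
  have rt: "cmod a * t < 1" "0 \<le> cmod a * t"
    using a t x mult_left_le[of t "cmod a"] by (smt (verit) norm_ge_zero zero_le_mult_iff)+
  have s: "0 \<le> ?s"
    using a by (simp add: abs_square_less_1 less_imp_le)
  note bx = Tmob_denom_bounds[OF x, of a] and bnd_y = Tmob_denom_bounds[OF y, of a]
  have T: "cmod (Tmob a x - Tmob a y) = ?s / (cmod (1 - cnj a * x) * cmod (1 - cnj a * y))"
    using x y t a by (intro norm_Tmob_diff Tmob_denom_nonzero) auto
  have pos: "0 < cmod (1 - cnj a * x) * cmod (1 - cnj a * y)"
    using bx bnd_y rt by (smt (verit) mult_pos_pos)
  have "cmod (1 - cnj a * x) * cmod (1 - cnj a * y) \<le> (1 + cmod a * t)\<^sup>2"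
    using bx bnd_y rt unfolding power2_eq_square by (intro mult_mono) auto
  then show "?s / (1 + cmod a * t)\<^sup>2 \<le> cmod (Tmob a x - Tmob a y)"
    unfolding T using s pos rt by (intro divide_left_mono mult_pos_pos) auto
  have "(1 - cmod a * t)\<^sup>2 \<le> cmod (1 - cnj a * x) * cmod (1 - cnj a * y)"
    using bx bnd_y rt unfolding power2_eq_square by (intro mult_mono) auto
  moreover have "0 < (1 - cmod a * t)\<^sup>2"
    using rt by simp
  ultimately show "cmod (Tmob a x - Tmob a y) \<le> ?s / (1 - cmod a * t)\<^sup>2"
    unfolding T using s pos by (intro divide_left_mono) (auto intro: mult_pos_pos)
qed

lemma Tmob_in_ball:
  assumes "cmod a < 1" "cmod z < 1"
  shows "cmod (Tmob a z) < 1"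
proof -
  have key: "(cmod (1 - cnj a * z))\<^sup>2 - (cmod (z - a))\<^sup>2 = (1 - (cmod a)\<^sup>2) * (1 - (cmod z)\<^sup>2)"
    unfolding cmod_power2 by (simp add: power2_eq_square algebra_simps)
  have "(cmod a)\<^sup>2 < 1" "(cmod z)\<^sup>2 < 1"
    using assms by (simp_all add: abs_square_less_1)
  then have "(cmod (z - a))\<^sup>2 < (cmod (1 - cnj a * z))\<^sup>2"
    using key by (smt (verit) mult_pos_pos)
  then have "cmod (z - a) < cmod (1 - cnj a * z)"
    by (rule power2_less_imp_less) simp
  moreover have "0 < cmod (1 - cnj a * z)"
    using calculation by (smt (verit) norm_ge_zero)
  ultimately show ?thesis
    unfolding Tmob_def norm_divide by simp
qed

lemma Tmob_onto_sphere:
  assumes a: "cmod a < 1" and w: "cmod w = 1"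
  obtains z where "cmod z = 1" "Tmob a z = w"
proof
  have ww: "cnj w * w = 1"
    using w by (metis complex_norm_square mult.commute of_real_1 power_one)
  have nz: "1 + cnj a * w \<noteq> 0"
  proof
    assume "1 + cnj a * w = 0"
    then have "cmod (cnj a * w) = 1"
      by (metis add_eq_0_iff norm_minus_cancel norm_one)
    then show False
      using assms by (simp add: norm_mult)
  qed
  have na: "1 - cnj a * a \<noteq> 0"
    using Tmob_denom_nonzero[OF a, of a] a by simp
  define z where "z = (w + a) / (1 + cnj a * w)"
  have "cmod (1 + cnj a * w) = cmod (cnj w * (1 + cnj a * w))"
    using w by (simp add: norm_mult)
  also have "cnj w * (1 + cnj a * w) = cnj (w + a)"
    using ww by (simp add: algebra_simps)
  finally have "cmod (1 + cnj a * w) = cmod (w + a)"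
    by (simp only: complex_mod_cnj)
  then show "cmod z = 1"
    using nz by (metis divide_self_if norm_divide norm_eq_zero z_def norm_one)
  have "z - a = w * (1 - cnj a * a) / (1 + cnj a * w)"
    and "1 - cnj a * z = (1 - cnj a * a) / (1 + cnj a * w)"
    using nz unfolding z_def by (simp_all add: field_simps)
  then show "Tmob a z = w"
    unfolding Tmob_def using nz na by simp
qed

lemma Tmob_fixed_boundary_point:
  assumes a: "cmod a < 1"
  obtains u where "cmod u = 1" "Tmob a (- u) = - u" "cmod (1 - cnj a * (- u)) = 1 + cmod a"
proof
  define u where "u = (if a = 0 then 1 else a / complex_of_real (cmod a))"
  show u1: "cmod u = 1"
    unfolding u_def by (auto simp: norm_divide)
  have "cnj u * u = 1"
    using u1 by (metis complex_norm_square mult.commute of_real_1 power_one)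
  moreover have "a = complex_of_real (cmod a) * u"
    unfolding u_def by auto
  ultimately have au: "cnj a * u = complex_of_real (cmod a)"
    by (metis complex_cnj_complex_of_real complex_cnj_mult mult.assoc mult.commute mult.right_neutral)
  then have den: "1 - cnj a * (- u) = complex_of_real (1 + cmod a)"
    by simp
  then show "cmod (1 - cnj a * (- u)) = 1 + cmod a"
    by (smt (verit) norm_ge_zero norm_of_real)
  have "- u - a = - u * (1 - cnj a * (- u))"
    using au \<open>a = complex_of_real (cmod a) * u\<close> by (simp add: algebra_simps)
  moreover have "1 - cnj a * (- u) \<noteq> 0"
    unfolding den by (smt (verit) norm_ge_zero of_real_eq_0_iff)
  ultimately show "Tmob a (- u) = - u"
    unfolding Tmob_def by simp
qed

lemma bD_Tmob_le:
  assumes p: "1 \<le> p" and a: "cmod a < 1" and z1: "cmod z1 < 1" and z2: "cmod z2 < 1"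
  shows "bD p (Tmob a z1) (Tmob a z2) \<le> ((1 + cmod a) / (1 - cmod a))\<^sup>2 * bD p z1 z2"
proof (rule bD_le)
  define s where "s = 1 - (cmod a)\<^sup>2"
  define k where "k = s / (1 + cmod a)\<^sup>2"
  have s: "0 < s"
    unfolding s_def using a by (simp add: abs_square_less_1)
  have k: "0 < k"
    unfolding k_def using s by (smt (verit) divide_pos_pos norm_ge_zero zero_less_power)
  fix w :: complex
  assume "w \<in> sphere 0 1"
  then obtain z where z: "cmod z = 1" "Tmob a z = w"
    using Tmob_onto_sphere[OF a] by auto
  define d where "d = lp_norm2 p (cmod (z1 - z)) (cmod (z2 - z))"
  have d: "0 < d"
    unfolding d_def using dist_sphere_ge[OF z(1), of z1] z1 by (intro lp_norm2_pos[OF p]) auto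
  have "k * cmod (zi - z) \<le> cmod (Tmob a zi - Tmob a z)" if "cmod zi < 1" for zi
    using Tmob_distortion(1)[OF a order_refl, of zi z] that z
    unfolding k_def s_def by (simp add: field_simps)
  then have "k * d \<le> lp_norm2 p (cmod (Tmob a z1 - w)) (cmod (Tmob a z2 - w))"
    unfolding d_def z(2)[symmetric] lp_norm2_scale[OF p norm_ge_zero norm_ge_zero k[THEN less_imp_le], symmetric]
    using k z1 z2 by (intro lp_norm2_mono[OF p]) auto
  moreover have "cmod (Tmob a z1 - Tmob a z2) \<le> s * cmod (z1 - z2) / (1 - cmod a)\<^sup>2"
    using Tmob_distortion(2)[OF a order_refl, of z1 z2] z1 z2 unfolding s_def by simp
  ultimately have "cmod (Tmob a z1 - Tmob a z2) / lp_norm2 p (cmod (Tmob a z1 - w)) (cmod (Tmob a z2 - w))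
      \<le> (s * cmod (z1 - z2) / (1 - cmod a)\<^sup>2) / (k * d)"
    using s k d by (intro frac_le) auto
  also have "\<dots> = ((1 + cmod a) / (1 - cmod a))\<^sup>2 * (cmod (z1 - z2) / d)"
    unfolding k_def using s d by (simp add: field_simps power_divide)
  also have "\<dots> \<le> ((1 + cmod a) / (1 - cmod a))\<^sup>2 * bD p z1 z2"
    unfolding d_def using bD_ge[OF p z1, of z z2] z by (intro mult_left_mono) auto
  finally show "cmod (Tmob a z1 - Tmob a z2) / lp_norm2 p (cmod (Tmob a z1 - w)) (cmod (Tmob a z2 - w))
      \<le> ((1 + cmod a) / (1 - cmod a))\<^sup>2 * bD p z1 z2" .
qed

lemma bD_le_near_origin:
  assumes p: "1 \<le> p" and t: "t < 1" and z1: "cmod z1 \<le> t" and z2: "cmod z2 \<le> t"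
  shows "bD p z1 z2 \<le> cmod (z1 - z2) / ((1 - t) * lp_norm2 p 1 1)"
proof (rule bD_le)
  fix z :: complex
  assume "z \<in> sphere 0 1"
  then have "1 - t \<le> cmod (z1 - z)" "1 - t \<le> cmod (z2 - z)"
    using dist_sphere_ge[of z z1] dist_sphere_ge[of z z2] z1 z2 by auto
  then have "(1 - t) * lp_norm2 p 1 1 \<le> lp_norm2 p (cmod (z1 - z)) (cmod (z2 - z))"
    using t by (intro lp_norm2_ge_scale[OF p]) auto
  moreover have "0 < (1 - t) * lp_norm2 p 1 1"
    using t lp_norm2_pos[OF p, of 1 1] by simp
  ultimately show "cmod (z1 - z2) / lp_norm2 p (cmod (z1 - z)) (cmod (z2 - z))
      \<le> cmod (z1 - z2) / ((1 - t) * lp_norm2 p 1 1)"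
    by (intro divide_left_mono) auto
qed

lemma bD_Tmob_ge_near_origin:
  assumes p: "1 \<le> p" and a: "cmod a < 1" and t: "0 \<le> t" "t < 1"
    and z1: "cmod z1 \<le> t" and z2: "cmod z2 \<le> t"
  shows "(1 + cmod a) * (1 - cmod a * t) / ((1 + cmod a * t)\<^sup>2 * (1 + t))
      * cmod (z1 - z2) / lp_norm2 p 1 1 \<le> bD p (Tmob a z1) (Tmob a z2)"
proof -
  define r where "r = cmod a"
  define s where "s = 1 - r\<^sup>2"
  define m where "m = s * (1 + t) / ((1 - r * t) * (1 + r))"
  define c where "c = lp_norm2 p 1 1"
  have r: "0 \<le> r" "r < 1" "r * t < 1" "0 \<le> r * t"
    using a t mult_left_le[of t r] unfolding r_def by auto
  have s: "0 < s"
    unfolding s_def using r by (simp add: abs_square_less_1)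
  have c: "0 < c"
    unfolding c_def using lp_norm2_pos[OF p, of 1 1] by simp
  have m: "0 < m"
    unfolding m_def using s t r by simp
  obtain u where u: "cmod u = 1" "Tmob a (- u) = - u" "cmod (1 - cnj a * (- u)) = 1 + r"
    using Tmob_fixed_boundary_point[OF a] unfolding r_def by blast
  have near_u: "cmod (Tmob a x - - u) \<le> m" if x: "cmod x \<le> t" for x
  proof -
    have "1 - cnj a * (- u) \<noteq> 0"
      using u(3) r by auto
    then have "cmod (Tmob a x - - u) = s * cmod (x + u) / (cmod (1 - cnj a * x) * (1 + r))"
      using norm_Tmob_diff[OF a, of x "- u"] Tmob_denom_nonzero[OF a, of x] u x t
      unfolding s_def r_def by simp
    also have "\<dots> \<le> m"
      unfolding m_def
    proof (rule frac_le)
      show "s * cmod (x + u) \<le> s * (1 + t)"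
        using s norm_triangle_ineq[of x u] x u by simp
      show "(1 - r * t) * (1 + r) \<le> cmod (1 - cnj a * x) * (1 + r)"
        using Tmob_denom_bounds(1)[OF x, of a] r unfolding r_def by (intro mult_right_mono) auto
    qed (use s t r in auto)
    finally show ?thesis .
  qed
  have "0 < cmod (Tmob a z1 - - u)"
    using Tmob_in_ball[OF a, of z1] dist_sphere_ge[of "- u" "Tmob a z1"] z1 t u by force
  then have den_pos: "0 < lp_norm2 p (cmod (Tmob a z1 - - u)) (cmod (Tmob a z2 - - u))"
    by (rule lp_norm2_pos[OF p]) simp
  have "(1 + r) * (1 - r * t) / ((1 + r * t)\<^sup>2 * (1 + t)) * cmod (z1 - z2) / c
      = (s * cmod (z1 - z2) / (1 + r * t)\<^sup>2) / (m * c)"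
  proof -
    have "s \<noteq> 0" "c \<noteq> 0" "1 + t \<noteq> 0" "1 + r \<noteq> 0" "1 - r * t \<noteq> 0" "1 + r * t \<noteq> 0"
      using s c t r by (auto simp: add_nonneg_eq_0_iff)
    then show ?thesis
      unfolding m_def by (simp add: divide_simps)
  qed
  also have "\<dots> \<le> cmod (Tmob a z1 - Tmob a z2) / lp_norm2 p (cmod (Tmob a z1 - - u)) (cmod (Tmob a z2 - - u))"
  proof (rule frac_le)
    show "s * cmod (z1 - z2) / (1 + r * t)\<^sup>2 \<le> cmod (Tmob a z1 - Tmob a z2)"
      using Tmob_distortion(1)[OF a _ z1 z2] t unfolding s_def r_def by simp
    show "lp_norm2 p (cmod (Tmob a z1 - - u)) (cmod (Tmob a z2 - - u)) \<le> m * c"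
      unfolding c_def using near_u[OF z1] near_u[OF z2] by (intro lp_norm2_le_scale[OF p]) auto
  qed (use den_pos in auto)
  also have "\<dots> \<le> bD p (Tmob a z1) (Tmob a z2)"
    using Tmob_in_ball[OF a, of z1] z1 t u by (intro bD_ge[OF p]) auto
  finally show ?thesis
    unfolding r_def c_def .
qed

lemma admissible_const_lower_bound:
  assumes p: "1 \<le> p" and a: "cmod a < 1" and t: "0 < t" "t < 1"
    and C: "\<forall>z1\<in>ball 0 1. \<forall>z2\<in>ball 0 1. bD p (Tmob a z1) (Tmob a z2) \<le> C * bD p z1 z2"
  shows "(1 + cmod a) * (1 - t) * (1 - cmod a * t) / ((1 + cmod a * t)\<^sup>2 * (1 + t)) \<le> C"
proof -
  define G where "G = (1 + cmod a) * (1 - cmod a * t) / ((1 + cmod a * t)\<^sup>2 * (1 + t))"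
  define c where "c = lp_norm2 p 1 1"
  define z where "z = complex_of_real t"
  have z: "cmod z = t" "cmod (z - 0) = t"
    using t by (simp_all add: z_def)
  have c: "0 < c"
    unfolding c_def using lp_norm2_pos[OF p, of 1 1] by simp
  have "cmod a * t < 1" "0 \<le> cmod a * t"
    using a t mult_left_le[of t "cmod a"] by simp_all
  then have at: "0 < 1 - cmod a * t" "0 < 1 + cmod a * t"
    by linarith+
  have "0 < 1 + cmod a" "0 < 1 + t"
    using t by (simp_all add: add_pos_nonneg)
  then have "0 < G"
    unfolding G_def by (intro divide_pos_pos mult_pos_pos zero_less_power at)
  then have pos: "0 < G * t / c"
    using t c by simp
  have "G * t / c \<le> bD p (Tmob a z) (Tmob a 0)"
    using bD_Tmob_ge_near_origin[OF p a _ t(2), of z 0] z t unfolding G_def c_def by simp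
  also have "\<dots> \<le> C * bD p z 0"
    using C z t by simp
  finally have lower: "G * t / c \<le> C * bD p z 0" .
  have "0 \<le> bD p z 0"
    using bD_nonneg[OF p] z t by simp
  with lower pos have "0 < C"
    using mult_nonpos_nonneg[of C "bD p z 0"] by linarith
  moreover have "bD p z 0 \<le> t / ((1 - t) * c)"
    using bD_le_near_origin[OF p t(2), of z 0] z t unfolding c_def by simp
  ultimately have "G * t / c \<le> C * (t / ((1 - t) * c))"
    using lower mult_left_mono[of "bD p z 0" _ C] by fastforce
  moreover have "G * t / c = G * (1 - t) * (t / ((1 - t) * c))"
    using t c by (simp add: field_simps)
  ultimately have "G * (1 - t) * (t / ((1 - t) * c)) \<le> C * (t / ((1 - t) * c))"
    by simp
  then have "G * (1 - t) \<le> C"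
    by (rule mult_right_le_imp_le) (use t c in simp)
  moreover have "0 < (1 + cmod a * t)\<^sup>2 * (1 + t)"
    using t at by simp
  ultimately show ?thesis
    unfolding G_def by (simp add: field_simps)
qed

theorem theorem4p4:
  fixes p :: ereal and a :: complex
  assumes "1 \<le> p" and "a \<in> ball 0 1"
  shows "Rconst p a \<ge> 1 + cmod a"
  unfolding Rconst_def
proof (rule cInf_greatest)
  have a: "cmod a < 1"
    using assms(2) by simp
  show "{C. \<forall>z1\<in>ball 0 1. \<forall>z2\<in>ball 0 1. bD p (Tmob a z1) (Tmob a z2) \<le> C * bD p z1 z2} \<noteq> {}"
    unfolding ex_in_conv[symmetric] mem_Collect_eq
    using bD_Tmob_le[OF assms(1) a] by (intro exI[of _ "((1 + cmod a) / (1 - cmod a))\<^sup>2"] ballI) simp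
  define F where "F t = (1 + cmod a) * (1 - t) * (1 - cmod a * t) / ((1 + cmod a * t)\<^sup>2 * (1 + t))"
    for t :: real
  fix C
  assume "C \<in> {C. \<forall>z1\<in>ball 0 1. \<forall>z2\<in>ball 0 1. bD p (Tmob a z1) (Tmob a z2) \<le> C * bD p z1 z2}"
  then have C: "\<forall>z1\<in>ball 0 1. \<forall>z2\<in>ball 0 1. bD p (Tmob a z1) (Tmob a z2) \<le> C * bD p z1 z2"
    by blast
  have bound: "F t \<le> C" if "t \<in> {0<..<1}" for t
    unfolding F_def using admissible_const_lower_bound[OF assms(1) a _ _ C] that by simp
  have "eventually (\<lambda>t. t \<in> {0<..<1}) (at_right (0::real))"
    by (rule eventually_at_right_real) simp
  then have "eventually (\<lambda>t. F t \<le> C) (at_right 0)"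
    by (rule eventually_mono) (rule bound)
  moreover have "(F \<longlongrightarrow> F 0) (at_right 0)"
    unfolding F_def by (intro tendsto_intros) auto
  ultimately have "F 0 \<le> C"
    using tendsto_upperbound trivial_limit_at_right_real by blast
  then show "1 + cmod a \<le> C"
    unfolding F_def by simp
qed

end
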